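(* Let $E$ be a system of partial differential equations with independent variables $x\in\mathbb{R}^n$ and dependent variables $u\in\mathbb{R}^m$ admitting a Lie algebra $N$ of infinitesimal point transformations, and let $H$ be an ideal of $N$ with $\operatorname{rank} H(\xi)\neq\operatorname{rank} H(\xi,\eta)$. For an $N/H$-invariant solution of the factor-system $E/H$ (of the $H$-partially invariant solution) to exist, the following condition must be satisfied: $$\operatorname{rank} N(\xi,\eta)-\operatorname{rank} N(\xi)=\operatorname{rank} H(\xi,\eta)-\operatorname{rank} H(\xi).$$
   Context: Generators have the form $X=\xi^i(x,u)\partial_{x^i}+\eta^k(x,u)\partial_{u^k}$. For a Lie algebra $M$ with basis $X_1,\dots,X_k$, $M(\xi)$ is the $k\times n$ matrix $(\xi^i_\alpha)$ and $M(\xi,\eta)$ the $k\times(n+m)$ matrix $(\xi^i_\alpha,\eta^j_\alpha)$; "rank" of such a matrix means its maximal rank over points. An $H$-invariant solution is one whose graph is invariant under $H$; the necessary condition for its existence used in this theory is $\operatorname{rank}H(\xi)=\operatorname{rank}H(\xi,\eta)$. For an $H$-partially invariant solution one takes the invariants of $H$: $\lambda^1(x),\dots,\lambda^\sigma(x)$ depending only on $x$ ($\sigma=n-\operatorname{rank}H(\xi)$) and $I^1(x,u),\dots,I^\mu(x,u)$ with $\operatorname{rank}\partial I/\partial u=\mu$ ($\mu=m+n-\operatorname{rank}H(\xi,\eta)-\sigma$); the orbit of the solution is written as relations among these invariants, the remaining (non-invariant) dependent functions are arbitrary functions of $x$, and substitution into $E$ yields a factor-system $E/H$ for the invariant functions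 of the invariant variables (plus a system for the non-invariant functions). The factor algebra $N/H$ acts, by its induced action, on the space of invariants of $H$; an $N/H$-invariant solution of $E/H$ is a solution of $E/H$ invariant under this induced action. *)

theory Defs
  imports "HOL-Analysis.Analysis"
begin

(* Points of the space of independent and dependent variables: (x,u) in R^n x R^m.
   A generator X = xi^i d_{x^i} + eta^k d_{u^k} is represented as the map
   p \<mapsto> (xi(p), eta(p)). *)
type_synonym ('n,'m) pt = "(real^'n) \<times> (real^'m)"
type_synonym ('n,'m) field = "('n::finite,'m::finite) pt \<Rightarrow> ('n,'m) pt"

definition row_rank :: "nat \<Rightarrow> 'c set \<Rightarrow> (nat \<Rightarrow> 'c \<Rightarrow> real) \<Rightarrow> nat" where
  "row_rank r C M = Max {card S | S. S \<subseteq> {..<r} \<and>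
     (\<forall>a. (\<forall>j\<in>C. (\<Sum>i\<in>S. a i * M i j) = 0) \<longrightarrow> (\<forall>i\<in>S. a i = 0))}"

(* "rank" of a point-dependent matrix: maximal rank over the points of D *)
definition max_rank :: "'p set \<Rightarrow> nat \<Rightarrow> 'c set \<Rightarrow> ('p \<Rightarrow> nat \<Rightarrow> 'c \<Rightarrow> real) \<Rightarrow> nat" where
  "max_rank D r C M = Max ((\<lambda>p. row_rank r C (M p)) ` D)"

definition xi_mat :: "(nat \<Rightarrow> ('n::finite,'m::finite) field) \<Rightarrow> ('n::finite,'m::finite) pt \<Rightarrow> nat \<Rightarrow> 'n \<Rightarrow> real" where
  "xi_mat X p a i = fst (X a p) $ i"

definition xieta_mat :: "(nat \<Rightarrow> ('n::finite,'m::finite) field) \<Rightarrow> ('n::finite,'m::finite) pt \<Rightarrow> nat \<Rightarrow> 'n + 'm \<Rightarrow> real" where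
  "xieta_mat X p a c = (case c of Inl i \<Rightarrow> fst (X a p) $ i | Inr j \<Rightarrow> snd (X a p) $ j)"

definition rank_xi :: "('n::finite,'m::finite) pt set \<Rightarrow> nat \<Rightarrow> (nat \<Rightarrow> ('n::finite,'m::finite) field) \<Rightarrow> nat" where
  "rank_xi D k X = max_rank D k UNIV (xi_mat X)"

definition rank_xieta :: "('n::finite,'m::finite) pt set \<Rightarrow> nat \<Rightarrow> (nat \<Rightarrow> ('n::finite,'m::finite) field) \<Rightarrow> nat" where
  "rank_xieta D k X = max_rank D k UNIV (xieta_mat X)"

definition lie_bracket :: "('n::finite,'m::finite) field \<Rightarrow> ('n,'m) field \<Rightarrow> ('n,'m) field" where
  "lie_bracket X Y p = frechet_derivative Y (at p) (X p) - frechet_derivative X (at p) (Y p)"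

definition lie_algebra_basis :: "('n::finite,'m::finite) pt set \<Rightarrow> nat \<Rightarrow> (nat \<Rightarrow> ('n::finite,'m::finite) field) \<Rightarrow> bool" where
  "lie_algebra_basis D k X \<longleftrightarrow>
     (\<forall>a<k. \<forall>p\<in>D. X a differentiable (at p)) \<and>
     (\<forall>c. (\<forall>p\<in>D. (\<Sum>a<k. c a *\<^sub>R X a p) = 0) \<longrightarrow> (\<forall>a<k. c a = 0)) \<and>
     (\<forall>a<k. \<forall>b<k. \<exists>c. \<forall>p\<in>D. lie_bracket (X a) (X b) p = (\<Sum>g<k. c g *\<^sub>R X g p))"

definition ideal_basis :: "('n::finite,'m::finite) pt set \<Rightarrow> nat \<Rightarrow> (nat \<Rightarrow> ('n::finite,'m::finite) field) \<Rightarrow> nat \<Rightarrow> (nat \<Rightarrow> ('n::finite,'m::finite) field) \<Rightarrow> bool" where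
  "ideal_basis D k X kH Y \<longleftrightarrow>
     lie_algebra_basis D kH Y \<and>
     (\<forall>b<kH. \<exists>c. \<forall>p\<in>D. Y b p = (\<Sum>a<k. c a *\<^sub>R X a p)) \<and>
     (\<forall>a<k. \<forall>b<kH. \<exists>c. \<forall>p\<in>D. lie_bracket (X a) (Y b) p = (\<Sum>g<kH. c g *\<^sub>R Y g p))"

(* regularity (standing assumption of the local theory): the ranks of H(xi) and
   H(xi,eta) are attained at every point of D *)
definition regular_ranks :: "('n::finite,'m::finite) pt set \<Rightarrow> nat \<Rightarrow> (nat \<Rightarrow> ('n::finite,'m::finite) field) \<Rightarrow> bool" where
  "regular_ranks D k X \<longleftrightarrow>
     (\<forall>p\<in>D. row_rank k UNIV (xi_mat X p) = rank_xi D k X \<and>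
              row_rank k UNIV (xieta_mat X p) = rank_xieta D k X)"

(* lam 0..lam(\<sigma>-1): invariants of H depending only on x, independent,
   \<sigma> = n - rank H(xi);
   I 0..I(\<mu>-1): invariants of H with rank dI/du = \<mu>,
   \<mu> = m + n - rank H(xi,eta) - \<sigma> *)
definition H_invariants ::
  "('n::finite,'m::finite) pt set \<Rightarrow> nat \<Rightarrow> (nat \<Rightarrow> ('n::finite,'m::finite) field) \<Rightarrow>
   nat \<Rightarrow> (nat \<Rightarrow> real^'n \<Rightarrow> real) \<Rightarrow> nat \<Rightarrow> (nat \<Rightarrow> ('n::finite,'m::finite) pt \<Rightarrow> real) \<Rightarrow> bool" where
  "H_invariants D kH Y \<sigma> lam \<mu> I \<longleftrightarrow>
     \<sigma> = CARD('n) - rank_xi D kH Y \<and>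
     \<mu> = CARD('m) + CARD('n) - rank_xieta D kH Y - \<sigma> \<and>
     (\<forall>j<\<sigma>. \<forall>p\<in>D. lam j differentiable (at (fst p)) \<and>
        (\<forall>b<kH. frechet_derivative (lam j) (at (fst p)) (fst (Y b p)) = 0)) \<and>
     (\<forall>l<\<mu>. \<forall>p\<in>D. I l differentiable (at p) \<and>
        (\<forall>b<kH. frechet_derivative (I l) (at p) (Y b p) = 0)) \<and>
     (\<forall>p\<in>D. \<forall>c. (\<forall>v. (\<Sum>j<\<sigma>. c j * frechet_derivative (lam j) (at (fst p)) v) = 0)
                 \<longrightarrow> (\<forall>j<\<sigma>. c j = 0)) \<and>
     (\<forall>p\<in>D. \<forall>c. (\<forall>w. (\<Sum>l<\<mu>. c l * frechet_derivative (I l) (at p) (0, w)) = 0)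
                 \<longrightarrow> (\<forall>l<\<mu>. c l = 0))"

(* Induced action of N on the invariants of H: coefficients of the generator
   induced by X a on the invariant independent variables lam and on the
   invariant dependent variables I *)
definition induced_xi :: "(nat \<Rightarrow> real^'n \<Rightarrow> real) \<Rightarrow> (nat \<Rightarrow> ('n::finite,'m::finite) field) \<Rightarrow>
   ('n::finite,'m::finite) pt \<Rightarrow> nat \<Rightarrow> nat \<Rightarrow> real" where
  "induced_xi lam X p a j = frechet_derivative (lam j) (at (fst p)) (fst (X a p))"

definition induced_xieta :: "(nat \<Rightarrow> real^'n \<Rightarrow> real) \<Rightarrow> (nat \<Rightarrow> ('n::finite,'m::finite) pt \<Rightarrow> real) \<Rightarrow>
   (nat \<Rightarrow> ('n::finite,'m::finite) field) \<Rightarrow> ('n::finite,'m::finite) pt \<Rightarrow> nat \<Rightarrow> nat + nat \<Rightarrow> real" where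
  "induced_xieta lam I X p a c = (case c of
      Inl j \<Rightarrow> frechet_derivative (lam j) (at (fst p)) (fst (X a p))
    | Inr l \<Rightarrow> frechet_derivative (I l) (at p) (X a p))"

(* Necessary condition (used in this theory) for the existence of an
   N/H-invariant solution of the factor system E/H: for the induced action,
   rank (N/H)(xi~) = rank (N/H)(xi~, eta~). *)
definition NH_invariant_solution_condition ::
  "('n::finite,'m::finite) pt set \<Rightarrow> nat \<Rightarrow> (nat \<Rightarrow> ('n::finite,'m::finite) field) \<Rightarrow>
   nat \<Rightarrow> (nat \<Rightarrow> real^'n \<Rightarrow> real) \<Rightarrow> nat \<Rightarrow> (nat \<Rightarrow> ('n::finite,'m::finite) pt \<Rightarrow> real) \<Rightarrow> bool" where
  "NH_invariant_solution_condition D k X \<sigma> lam \<mu> I \<longleftrightarrow>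
     max_rank D k {..<\<sigma>} (induced_xi lam X) =
     max_rank D k (Inl ` {..<\<sigma>} \<union> Inr ` {..<\<mu>}) (induced_xieta lam I X)"

end

theory Submission
  imports Defs
begin

text \<open>
  Fix a point p. The differentials of the invariants \<open>\<lambda>\<close> (resp. of \<open>\<lambda>\<close> and I) are independent
  functionals annihilating the generators of H, and there are as many of them as the codimension
  of the span of \<open>H(\<xi>)\<close> (resp. \<open>H(\<xi>,\<eta>)\<close>) at p. Hence their common kernel is exactly that span,
  and the rank of the induced matrix \<open>(N/H)(\<xi>~)\<close> at p is the rank of \<open>N(\<xi>)\<close> at p modulo
  the span of \<open>H(\<xi>)\<close>, i.e. \<open>rank N(\<xi>)(p) - rank H(\<xi>)\<close>, regularity making the second term
  constant; likewise for \<open>(\<xi>,\<eta>)\<close>. Taking maxima over the points, the equality of the two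
  induced ranks becomes the claimed identity.
\<close>

definition independent_modulo :: "'v::real_vector set \<Rightarrow> ('i \<Rightarrow> 'v) \<Rightarrow> 'i set \<Rightarrow> bool" where
  "independent_modulo K x S \<longleftrightarrow> (\<forall>a. (\<Sum>i\<in>S. a i *\<^sub>R x i) \<in> K \<longrightarrow> (\<forall>i\<in>S. a i = 0))"

lemma independent_modulo_subset:
  assumes "independent_modulo K x S" "finite S" "F \<subseteq> S"
  shows "independent_modulo K x F"
  unfolding independent_modulo_def
proof (intro allI impI)
  fix a assume a: "(\<Sum>i\<in>F. a i *\<^sub>R x i) \<in> K"
  have "(\<Sum>i\<in>S. (if i \<in> F then a i else 0) *\<^sub>R x i) = (\<Sum>i\<in>F. a i *\<^sub>R x i)"
    using assms(2,3) by (intro sum.mono_neutral_cong_right) auto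
  then have "\<forall>i\<in>S. (if i \<in> F then a i else 0) = 0"
    using assms(1)[unfolded independent_modulo_def, rule_format, of "\<lambda>i. if i \<in> F then a i else 0"] a
    by simp
  then show "\<forall>i\<in>F. a i = 0" using assms(3) by fastforce
qed

lemma independent_modulo_inj_on:
  assumes "independent_modulo K x S" "finite S" "subspace K"
  shows "inj_on x S"
proof (rule inj_onI, rule ccontr)
  fix i j assume ij: "i \<in> S" "j \<in> S" "x i = x j" "i \<noteq> j"
  have "independent_modulo K x {i, j}"
    by (rule independent_modulo_subset[OF assms(1,2)]) (use ij in auto)
  moreover have "(\<Sum>t\<in>{i, j}. (if t = i then 1 else -1) *\<^sub>R x t) = x i - x j"
    using ij(4) by simp
  then have "(\<Sum>t\<in>{i, j}. (if t = i then 1 else -1) *\<^sub>R x t) \<in> K"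
    using ij(3) subspace_0[OF assms(3)] by simp
  ultimately have "\<forall>t\<in>{i, j}. (if t = i then 1 else -1 :: real) = 0"
    unfolding independent_modulo_def by (rule spec[of _ "\<lambda>t. if t = i then 1 else -1", THEN mp])
  then show False by simp
qed

lemma independent_modulo_image_disjoint:
  assumes "independent_modulo K x S" "finite S" "B \<subseteq> K"
  shows "x ` S \<inter> B = {}"
proof (rule ccontr)
  assume "x ` S \<inter> B \<noteq> {}"
  then obtain i where i: "i \<in> S" "x i \<in> K" using assms(3) by auto
  have "independent_modulo K x {i}"
    by (rule independent_modulo_subset[OF assms(1,2)]) (use i in auto)
  moreover have "(\<Sum>t\<in>{i}. 1 *\<^sub>R x t) \<in> K" using i by simp
  ultimately have "\<forall>t\<in>{i}. (1::real) = 0"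
    unfolding independent_modulo_def by (rule spec[of _ "\<lambda>_. 1", THEN mp])
  then show False by simp
qed

lemma independent_image_Un_modulo:
  fixes x :: "'i \<Rightarrow> 'v::euclidean_space"
  assumes fin: "finite S" and K: "subspace K" and BK: "B \<subseteq> K" and iB: "independent B"
    and ind: "independent_modulo K x S"
  shows "independent (x ` S \<union> B)"
  unfolding independent_explicit
proof (intro conjI allI impI)
  have finB: "finite B" using iB independent_bound_general by blast
  then show "finite (x ` S \<union> B)" using fin by auto
  have inj: "inj_on x S" by (rule independent_modulo_inj_on[OF ind fin K])
  fix c assume c0: "(\<Sum>v\<in>x ` S \<union> B. c v *\<^sub>R v) = 0"
  have split: "(\<Sum>v\<in>x ` S \<union> B. c v *\<^sub>R v) = (\<Sum>i\<in>S. c (x i) *\<^sub>R x i) + (\<Sum>v\<in>B. c v *\<^sub>R v)"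
    using independent_modulo_image_disjoint[OF ind fin BK] fin finB
    by (simp add: sum.union_disjoint sum.reindex[OF inj])
  have "(\<Sum>i\<in>S. c (x i) *\<^sub>R x i) = - (\<Sum>v\<in>B. c v *\<^sub>R v)"
    using c0 split by (simp add: eq_neg_iff_add_eq_0)
  moreover have "(\<Sum>v\<in>B. c v *\<^sub>R v) \<in> K"
    by (rule subspace_sum[OF K]) (use BK K subspace_scale in blast)
  ultimately have "(\<Sum>i\<in>S. c (x i) *\<^sub>R x i) \<in> K"
    using K subspace_neg by metis
  then have z: "\<forall>i\<in>S. c (x i) = 0"
    using ind[unfolded independent_modulo_def, rule_format, of "\<lambda>i. c (x i)"] by blast
  then have "(\<Sum>v\<in>B. c v *\<^sub>R v) = 0" using c0 split by simp
  then have "\<forall>v\<in>B. c v = 0" using iB unfolding independent_explicit by blast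
  with z show "\<forall>v\<in>x ` S \<union> B. c v = 0" by blast
qed

lemma independent_modulo_if_independent_Un:
  fixes x :: "'i \<Rightarrow> 'v::euclidean_space"
  assumes inj: "inj_on x S" and disj: "x ` S \<inter> B = {}" and ind: "independent (x ` S \<union> B)"
    and KB: "K \<subseteq> span B"
  shows "independent_modulo K x S"
  unfolding independent_modulo_def
proof (intro allI impI)
  have fin: "finite (x ` S \<union> B)" using ind independent_bound_general by blast
  then have finS: "finite S" and finB: "finite B" using finite_image_iff[OF inj] by auto
  fix a assume "(\<Sum>i\<in>S. a i *\<^sub>R x i) \<in> K"
  then obtain u where u: "(\<Sum>i\<in>S. a i *\<^sub>R x i) = (\<Sum>v\<in>B. u v *\<^sub>R v)"
    using KB span_finite[OF finB] by auto
  define c where "c v = (if v \<in> B then - u v else a (inv_into S x v))" for v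
  have "(\<Sum>v\<in>x ` S \<union> B. c v *\<^sub>R v) = (\<Sum>i\<in>S. c (x i) *\<^sub>R x i) + (\<Sum>v\<in>B. c v *\<^sub>R v)"
    using disj finS finB by (simp add: sum.union_disjoint sum.reindex[OF inj])
  also have "(\<Sum>i\<in>S. c (x i) *\<^sub>R x i) = (\<Sum>i\<in>S. a i *\<^sub>R x i)"
    using disj inj by (intro sum.cong) (auto simp: c_def)
  also have "(\<Sum>v\<in>B. c v *\<^sub>R v) = - (\<Sum>v\<in>B. u v *\<^sub>R v)"
    by (simp add: c_def sum_negf)
  finally have "(\<Sum>v\<in>x ` S \<union> B. c v *\<^sub>R v) = 0" using u by simp
  then have c0: "\<forall>v\<in>x ` S \<union> B. c v = 0" using ind unfolding independent_explicit by blast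
  show "\<forall>i\<in>S. a i = 0"
  proof
    fix i assume i: "i \<in> S"
    then have "x i \<notin> B" "c (x i) = 0" using disj c0 by auto
    then show "a i = 0" using inv_into_f_f[OF inj i] by (simp add: c_def)
  qed
qed

lemma card_add_dim_le_modulo:
  fixes x :: "'i \<Rightarrow> 'v::euclidean_space"
  assumes "finite S" "subspace K" "independent_modulo K x S" "S \<subseteq> T"
  shows "card S + dim K \<le> dim (x ` T \<union> K)"
proof -
  obtain B where B: "B \<subseteq> K" "independent B" "K \<subseteq> span B" "card B = dim K"
    using basis_exists by blast
  have finB: "finite B" using B(2) independent_bound_general by blast
  have inj: "inj_on x S" by (rule independent_modulo_inj_on[OF assms(3,1,2)])
  have disj: "x ` S \<inter> B = {}" by (rule independent_modulo_image_disjoint[OF assms(3,1) B(1)])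
  have "x ` S \<union> B \<subseteq> x ` T \<union> K" using assms(4) B(1) by auto
  then have "card (x ` S \<union> B) \<le> dim (x ` T \<union> K)"
    by (rule independent_card_le_dim[OF _ independent_image_Un_modulo[OF assms(1,2) B(1,2) assms(3)]])
  moreover have "card (x ` S \<union> B) = card S + card B"
    using card_Un_disjoint[OF finite_imageI[OF assms(1)] finB disj] card_image[OF inj] by simp
  ultimately show ?thesis using B(4) by simp
qed

lemma obtain_independent_modulo:
  fixes x :: "'i \<Rightarrow> 'v::euclidean_space"
  assumes K: "subspace K"
  obtains S where "S \<subseteq> T" "independent_modulo K x S" "card S + dim K = dim (x ` T \<union> K)"
proof -
  txt \<open>Extend a basis B of K by vectors of \<open>x ` T\<close>; the added vectors form the family.\<close>
  obtain B where B: "B \<subseteq> K" "independent B" "K \<subseteq> span B" "card B = dim K"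
    using basis_exists by blast
  have finB: "finite B" using B(2) independent_bound_general by blast
  obtain B' where B': "B \<subseteq> B'" "B' \<subseteq> x ` T \<union> B" "independent B'" "x ` T \<union> B \<subseteq> span B'"
    using maximal_independent_subset_extend[of B "x ` T \<union> B"] B(2) by blast
  have "span B' = span (x ` T \<union> K)"
  proof
    show "span B' \<subseteq> span (x ` T \<union> K)"
      using B'(2) B(1) by (intro span_mono) auto
    have "K \<subseteq> span B'" using B(3) span_mono[OF B'(1)] by blast
    then show "span (x ` T \<union> K) \<subseteq> span B'"
      using B'(4) by (intro span_minimal) (auto simp: subspace_span)
  qed
  then have card_B': "card B' = dim (x ` T \<union> K)"
    using dim_eq_card[OF _ B'(3)] by simp
  have "B' - B \<subseteq> x ` T" using B'(2) by auto
  then obtain S where S: "S \<subseteq> T" "inj_on x S" "B' - B = x ` S"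
    using subset_image_inj by metis
  have "x ` S \<union> B = B'" using S(3) B'(1) by auto
  then have "independent_modulo K x S"
    using independent_modulo_if_independent_Un[OF S(2) _ _ B(3)] S(3) B'(3) by auto
  moreover have "card S + dim K = dim (x ` T \<union> K)"
  proof -
    have "finite B'" using B'(3) independent_bound_general by blast
    then have "card B \<le> card B'" using card_mono B'(1) by blast
    moreover have "card S = card B' - card B"
      using card_image[OF S(2)] S(3) card_Diff_subset[OF finB B'(1)] by simp
    ultimately show ?thesis using card_B' B(4) by simp
  qed
  ultimately show ?thesis using S(1) that by blast
qed

lemma row_rank_eq_dim_modulo:
  fixes x :: "nat \<Rightarrow> 'v::euclidean_space"
  assumes K: "subspace K"
    and char: "\<And>S a. S \<subseteq> {..<r} \<Longrightarrow>
       (\<forall>j\<in>C. (\<Sum>i\<in>S. a i * M i j) = 0) \<longleftrightarrow> (\<Sum>i\<in>S. a i *\<^sub>R x i) \<in> K"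
  shows "row_rank r C M + dim K = dim (x ` {..<r} \<union> K)"
proof -
  let ?A = "{card S | S. S \<subseteq> {..<r} \<and>
     (\<forall>a. (\<forall>j\<in>C. (\<Sum>i\<in>S. a i * M i j) = 0) \<longrightarrow> (\<forall>i\<in>S. a i = 0))}"
  have rows_iff: "(\<forall>a. (\<forall>j\<in>C. (\<Sum>i\<in>S. a i * M i j) = 0) \<longrightarrow> (\<forall>i\<in>S. a i = 0))
      \<longleftrightarrow> independent_modulo K x S" if "S \<subseteq> {..<r}" for S
    using char[OF that] by (simp add: independent_modulo_def)
  have A_eq: "?A = {card S | S. S \<subseteq> {..<r} \<and> independent_modulo K x S}"
    using rows_iff by blast
  have le: "n \<le> dim (x ` {..<r} \<union> K) - dim K" if "n \<in> ?A" for n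
  proof -
    from that obtain S where S: "n = card S" "S \<subseteq> {..<r}" "independent_modulo K x S"
      unfolding A_eq by blast
    then have "n + dim K \<le> dim (x ` {..<r} \<union> K)"
      using card_add_dim_le_modulo[OF finite_subset[OF S(2) finite_lessThan] K S(3,2)] by simp
    then show ?thesis by simp
  qed
  obtain S where S: "S \<subseteq> {..<r}" "independent_modulo K x S"
      "card S + dim K = dim (x ` {..<r} \<union> K)"
    using obtain_independent_modulo[OF K] by blast
  then have "dim (x ` {..<r} \<union> K) - dim K = card S" by simp
  then have attained: "dim (x ` {..<r} \<union> K) - dim K \<in> ?A"
    unfolding A_eq using S(1,2) by blast
  have "finite ?A"
    by (rule finite_subset[of _ "{..r}"]) (auto intro: card_mono[of "{..<r}", simplified])
  then have "row_rank r C M = dim (x ` {..<r} \<union> K) - dim K"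
    unfolding row_rank_def by (rule Max_eqI[OF _ le attained])
  then show ?thesis using dim_subset[of K "x ` {..<r} \<union> K"] by simp
qed

lemma row_rank_linear_functionals:
  fixes x :: "nat \<Rightarrow> 'v::euclidean_space"
  assumes lin: "\<And>c. c \<in> C \<Longrightarrow> linear (g c)"
    and M: "\<And>i c. i < r \<Longrightarrow> c \<in> C \<Longrightarrow> M i c = g c (x i)"
  shows "row_rank r C M + dim {v. \<forall>c\<in>C. g c v = 0} = dim (x ` {..<r} \<union> {v. \<forall>c\<in>C. g c v = 0})"
proof (rule row_rank_eq_dim_modulo)
  show "subspace {v. \<forall>c\<in>C. g c v = 0}"
    unfolding subspace_def using lin by (auto simp: linear_0 linear_add linear_scale)
  fix S a assume S: "S \<subseteq> {..<r}"
  have "(\<Sum>i\<in>S. a i * M i c) = g c (\<Sum>i\<in>S. a i *\<^sub>R x i)" if c: "c \<in> C" for c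
  proof -
    have "g c (\<Sum>i\<in>S. a i *\<^sub>R x i) = (\<Sum>i\<in>S. g c (a i *\<^sub>R x i))"
      by (rule linear_sum[OF lin[OF c]])
    also have "\<dots> = (\<Sum>i\<in>S. a i * M i c)"
      using S c by (intro sum.cong) (auto simp: linear_scale[OF lin[OF c]] M)
    finally show ?thesis by simp
  qed
  then show "(\<forall>j\<in>C. (\<Sum>i\<in>S. a i * M i j) = 0) \<longleftrightarrow> (\<Sum>i\<in>S. a i *\<^sub>R x i) \<in> {v. \<forall>c\<in>C. g c v = 0}"
    by auto
qed

lemma dim_common_kernel:
  fixes g :: "'i \<Rightarrow> 'v::euclidean_space \<Rightarrow> real"
  assumes fin: "finite J" and lin: "\<And>i. i \<in> J \<Longrightarrow> linear (g i)"
    and ind: "\<And>c. (\<forall>v. (\<Sum>i\<in>J. c i * g i v) = 0) \<Longrightarrow> \<forall>i\<in>J. c i = 0"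
  shows "dim {v. \<forall>i\<in>J. g i v = 0} + card J = DIM('v)"
proof -
  txt \<open>Represent the functionals by vectors; the kernel is the orthogonal complement of their span.\<close>
  define w where "w i = adjoint (g i) 1" for i
  have rep: "g i v = w i \<bullet> v" if "i \<in> J" for i v
    using adjoint_works[OF lin[OF that], of v 1] by (simp add: w_def inner_commute)
  have ind_w: "independent_modulo {0} w J"
    unfolding independent_modulo_def
  proof (intro allI impI)
    fix c assume c: "(\<Sum>i\<in>J. c i *\<^sub>R w i) \<in> {0}"
    have "(\<Sum>i\<in>J. c i * g i v) = (\<Sum>i\<in>J. c i *\<^sub>R w i) \<bullet> v" for v
      by (simp add: rep inner_sum_left)
    with c have "\<forall>v. (\<Sum>i\<in>J. c i * g i v) = 0" by simp
    then show "\<forall>i\<in>J. c i = 0" by (rule ind)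
  qed
  have "independent (w ` J)"
    using independent_image_Un_modulo[OF fin subspace_single_0 _ independent_empty ind_w] by simp
  then have "dim (span (w ` J)) = card J"
    using card_image[OF independent_modulo_inj_on[OF ind_w fin subspace_single_0]]
    by (simp add: dim_eq_card_independent)
  moreover have "{v. \<forall>i\<in>J. g i v = 0} = {v \<in> UNIV. \<forall>u\<in>span (w ` J). orthogonal u v}"
  proof (intro set_eqI iffI)
    fix v assume "v \<in> {v. \<forall>i\<in>J. g i v = 0}"
    then have "orthogonal v u" if "u \<in> w ` J" for u
      using that rep by (auto simp: orthogonal_def inner_commute)
    then show "v \<in> {v \<in> UNIV. \<forall>u\<in>span (w ` J). orthogonal u v}"
      using orthogonal_to_span orthogonal_commute by blast
  next
    fix v assume "v \<in> {v \<in> UNIV. \<forall>u\<in>span (w ` J). orthogonal u v}"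
    then show "v \<in> {v. \<forall>i\<in>J. g i v = 0}"
      using rep by (auto simp: orthogonal_def intro: span_base)
  qed
  moreover have "dim {v \<in> UNIV. \<forall>u\<in>span (w ` J). orthogonal u v} + dim (span (w ` J)) = DIM('v)"
    using dim_subspace_orthogonal_to_vectors[of "span (w ` J)" UNIV] by (simp add: subspace_span)
  ultimately show ?thesis by simp
qed

lemma row_rank_le: "row_rank r C M \<le> r"
proof -
  let ?A = "{card S | S. S \<subseteq> {..<r} \<and>
     (\<forall>a. (\<forall>j\<in>C. (\<Sum>i\<in>S. a i * M i j) = 0) \<longrightarrow> (\<forall>i\<in>S. a i = 0))}"
  have "card S \<le> r" if "S \<subseteq> {..<r}" for S :: "nat set"
    using card_mono[OF finite_lessThan that] by simp
  then have sub: "?A \<subseteq> {..r}" by auto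
  have "0 \<in> ?A" by (intro CollectI exI[of _ "{}"]) simp
  then have "Max ?A \<in> ?A"
    using sub by (intro Max_in) (auto intro: finite_subset)
  then show ?thesis unfolding row_rank_def using sub by auto
qed

lemma finite_image_row_rank: "finite ((\<lambda>p. row_rank r C (M p)) ` D)"
  by (rule finite_subset[of _ "{..r}"]) (auto simp: row_rank_le)

lemma dim_Un_span:
  fixes A B :: "'v::euclidean_space set"
  assumes "B \<subseteq> span A" shows "dim (A \<union> span B) = dim A"
proof -
  have "span B \<subseteq> span A" using assms by (simp add: span_minimal subspace_span)
  then have "span (A \<union> span B) = span A"
    by (intro subset_antisym) (simp_all add: span_minimal span_superset subspace_span span_mono)
  then show ?thesis by (metis dim_span)
qed

lemma row_rank_add_dim_kernel_span:
  fixes x :: "nat \<Rightarrow> 'v::euclidean_space" and g :: "'c \<Rightarrow> 'v \<Rightarrow> real"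
  assumes fin: "finite C"
    and lin: "\<And>c. c \<in> C \<Longrightarrow> linear (g c)"
    and indep: "\<And>a. (\<forall>v. (\<Sum>c\<in>C. a c * g c v) = 0) \<Longrightarrow> \<forall>c\<in>C. a c = 0"
    and M: "\<And>i c. i < r \<Longrightarrow> c \<in> C \<Longrightarrow> M i c = g c (x i)"
    and W_ker: "W \<subseteq> {v. \<forall>c\<in>C. g c v = 0}"
    and W_dim: "DIM('v) \<le> dim W + card C"
    and W_span: "W \<subseteq> span (x ` {..<r})"
  shows "row_rank r C M + dim W = dim (x ` {..<r})"
proof -
  define Z where "Z = {v. \<forall>c\<in>C. g c v = 0}"
  have "subspace Z"
    unfolding Z_def subspace_def using lin by (auto simp: linear_0 linear_add linear_scale)
  have "dim Z + card C = DIM('v)"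
    unfolding Z_def by (rule dim_common_kernel[OF fin lin indep])
  moreover have "dim W \<le> dim Z" using W_ker by (simp add: Z_def dim_subset)
  txt \<open>Only an inequality is assumed in \<open>W_dim\<close>, because the number \<open>\<mu>\<close> of invariants
    is defined by truncated subtraction.\<close>
  ultimately have "span W = Z"
    using dim_eq_span[of W Z] W_ker W_dim \<open>subspace Z\<close> by (simp add: Z_def)
  have "row_rank r C M + dim Z = dim (x ` {..<r} \<union> Z)"
    unfolding Z_def by (rule row_rank_linear_functionals[OF lin M])
  moreover have "dim (x ` {..<r} \<union> Z) = dim (x ` {..<r})"
    using dim_Un_span[OF W_span] \<open>span W = Z\<close> by simp
  moreover have "dim Z = dim W"
    using \<open>span W = Z\<close> dim_span by metis
  ultimately show ?thesis by simp
qed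

lemma row_rank_xieta_mat:
  fixes X :: "nat \<Rightarrow> ('n::finite,'m::finite) field"
  shows "row_rank k UNIV (xieta_mat X p) = dim ((\<lambda>a. X a p) ` {..<k})"
proof -
  define g :: "'n + 'm \<Rightarrow> ('n,'m) pt \<Rightarrow> real" where
    "g c v = (case c of Inl i \<Rightarrow> fst v $ i | Inr j \<Rightarrow> snd v $ j)" for c v
  have ker: "{v. \<forall>c\<in>UNIV. g c v = 0} = {0}"
    by (auto simp: g_def prod_eq_iff vec_eq_iff split: sum.split)
  have "row_rank k UNIV (xieta_mat X p) + dim {0::('n,'m) pt} = dim ((\<lambda>a. X a p) ` {..<k} \<union> {0})"
    unfolding ker[symmetric]
    by (rule row_rank_linear_functionals) (auto simp: g_def xieta_mat_def split: sum.split intro!: linearI)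
  then show ?thesis by (simp add: dim_insert span_zero)
qed

lemma row_rank_xi_mat:
  fixes X :: "nat \<Rightarrow> ('n::finite,'m::finite) field"
  shows "row_rank k UNIV (xi_mat X p) = dim ((\<lambda>a. fst (X a p)) ` {..<k})"
proof -
  define g :: "'n \<Rightarrow> real^'n \<Rightarrow> real" where "g i v = v $ i" for i v
  have ker: "{v. \<forall>c\<in>UNIV. g c v = 0} = {0}"
    by (auto simp: g_def vec_eq_iff)
  have "row_rank k UNIV (xi_mat X p) + dim {0::real^'n} = dim ((\<lambda>a. fst (X a p)) ` {..<k} \<union> {0})"
    unfolding ker[symmetric]
    by (rule row_rank_linear_functionals) (auto simp: g_def xi_mat_def intro!: linearI)
  then show ?thesis by (simp add: dim_insert span_zero)
qed

lemma ideal_basis_span_subset: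
  assumes "ideal_basis D k X kH Y" "p \<in> D"
  shows "(\<lambda>b. Y b p) ` {..<kH} \<subseteq> span ((\<lambda>a. X a p) ` {..<k})"
proof
  fix y assume "y \<in> (\<lambda>b. Y b p) ` {..<kH}"
  then obtain b where b: "b < kH" "y = Y b p" by auto
  obtain c where "y = (\<Sum>a<k. c a *\<^sub>R X a p)"
    using assms b unfolding ideal_basis_def by blast
  moreover have "(\<Sum>a<k. c a *\<^sub>R X a p) \<in> span ((\<lambda>a. X a p) ` {..<k})"
    by (rule span_sum, rule span_scale, rule span_base) auto
  ultimately show "y \<in> span ((\<lambda>a. X a p) ` {..<k})" by simp
qed

lemma ideal_basis_span_subset_fst:
  assumes "ideal_basis D k X kH Y" "p \<in> D"
  shows "(\<lambda>b. fst (Y b p)) ` {..<kH} \<subseteq> span ((\<lambda>a. fst (X a p)) ` {..<k})"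
proof -
  have "fst ` (\<lambda>b. Y b p) ` {..<kH} \<subseteq> fst ` span ((\<lambda>a. X a p) ` {..<k})"
    using ideal_basis_span_subset[OF assms] by (rule image_mono)
  then show ?thesis
    by (simp add: span_linear_image[OF linear_fst, symmetric] image_image)
qed

lemma max_rank_add_const:
  assumes "D \<noteq> {}"
    and "\<And>p. p \<in> D \<Longrightarrow> row_rank r C (M p) + c = row_rank r' C' (M' p)"
  shows "max_rank D r C M + c = max_rank D r' C' M'"
proof -
  have "max_rank D r C M + c = Max ((\<lambda>p. row_rank r C (M p) + c) ` D)"
    unfolding max_rank_def
    using Max_add_commute[of "(\<lambda>p. row_rank r C (M p)) ` D" "\<lambda>y. y" c] assms(1)
    by (simp add: finite_image_row_rank image_image)
  also have "\<dots> = max_rank D r' C' M'"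
    unfolding max_rank_def using assms(2) by (simp cong: image_cong)
  finally show ?thesis .
qed

lemma row_rank_induced_xi:
  fixes X Y :: "nat \<Rightarrow> ('n::finite,'m::finite) field"
  assumes H: "H_invariants D kH Y \<sigma> lam \<mu> I" and reg: "regular_ranks D kH Y"
    and ideal: "ideal_basis D k X kH Y" and p: "p \<in> D"
  shows "row_rank k {..<\<sigma>} (induced_xi lam X p) + rank_xi D kH Y = row_rank k UNIV (xi_mat X p)"
proof -
  note H' = H[unfolded H_invariants_def]
  define g where "g j = frechet_derivative (lam j) (at (fst p))" for j
  have "row_rank k {..<\<sigma>} (induced_xi lam X p) + dim ((\<lambda>b. fst (Y b p)) ` {..<kH})
      = dim ((\<lambda>a. fst (X a p)) ` {..<k})"
  proof (rule row_rank_add_dim_kernel_span[where g = g and x = "\<lambda>a. fst (X a p)"])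
    show "linear (g j)" if "j \<in> {..<\<sigma>}" for j
      using H' p that by (auto simp: g_def intro: linear_frechet_derivative)
    show "\<forall>j\<in>{..<\<sigma>}. a j = 0" if "\<forall>v. (\<Sum>j\<in>{..<\<sigma>}. a j * g j v) = 0" for a
      using H' p that by (simp add: g_def)
    show "(\<lambda>b. fst (Y b p)) ` {..<kH} \<subseteq> {v. \<forall>j\<in>{..<\<sigma>}. g j v = 0}"
      using H' p by (auto simp: g_def)
    show "DIM(real^'n) \<le> dim ((\<lambda>b. fst (Y b p)) ` {..<kH}) + card {..<\<sigma>}"
      using H' reg p by (simp add: regular_ranks_def row_rank_xi_mat)
    show "(\<lambda>b. fst (Y b p)) ` {..<kH} \<subseteq> span ((\<lambda>a. fst (X a p)) ` {..<k})"
      by (rule ideal_basis_span_subset_fst[OF ideal p])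
  qed (simp_all add: induced_xi_def g_def)
  then show ?thesis using reg p by (simp add: regular_ranks_def row_rank_xi_mat)
qed

lemma row_rank_induced_xieta:
  fixes X Y :: "nat \<Rightarrow> ('n::finite,'m::finite) field"
  assumes H: "H_invariants D kH Y \<sigma> lam \<mu> I" and reg: "regular_ranks D kH Y"
    and ideal: "ideal_basis D k X kH Y" and p: "p \<in> D"
  shows "row_rank k (Inl ` {..<\<sigma>} \<union> Inr ` {..<\<mu>}) (induced_xieta lam I X p) + rank_xieta D kH Y
      = row_rank k UNIV (xieta_mat X p)"
proof -
  note H' = H[unfolded H_invariants_def]
  define C where "C = Inl ` {..<\<sigma>} \<union> Inr ` {..<\<mu>}"
  define dlam where "dlam j = frechet_derivative (lam j) (at (fst p))" for j
  define dI where "dI l = frechet_derivative (I l) (at p)" for l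
  define g where "g c v = (case c of Inl j \<Rightarrow> dlam j (fst v) | Inr l \<Rightarrow> dI l v)" for c v
  have lin_dlam: "linear (dlam j)" if "j < \<sigma>" for j
    using H' p that by (auto simp: dlam_def intro: linear_frechet_derivative)
  have lin_dI: "linear (dI l)" if "l < \<mu>" for l
    using H' p that by (auto simp: dI_def intro: linear_frechet_derivative)
  have indep_dlam: "\<forall>j<\<sigma>. a j = 0" if "\<forall>v. (\<Sum>j<\<sigma>. a j * dlam j v) = 0" for a
    using H' p that unfolding dlam_def by blast
  have indep_dI: "\<forall>l<\<mu>. a l = 0" if "\<forall>w. (\<Sum>l<\<mu>. a l * dI l (0, w)) = 0" for a
    using H' p that unfolding dI_def by blast
  have lin: "linear (g c)" if "c \<in> C" for c
  proof -
    have "linear (\<lambda>v. dlam j (fst v))" if "j < \<sigma>" for j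
      using linear_compose[OF linear_fst lin_dlam[OF that]] by (simp add: o_def)
    then show ?thesis
      using that lin_dI by (auto simp: C_def g_def[abs_def])
  qed
  have sum_C: "(\<Sum>c\<in>C. a c * g c v) = (\<Sum>j<\<sigma>. a (Inl j) * dlam j (fst v)) + (\<Sum>l<\<mu>. a (Inr l) * dI l v)"
    for a v
    unfolding C_def by (subst sum.union_disjoint) (auto simp: sum.reindex g_def)
  have indep: "\<forall>c\<in>C. a c = 0" if a: "\<forall>v. (\<Sum>c\<in>C. a c * g c v) = 0" for a
  proof -
    have "dlam j 0 = 0" if "j < \<sigma>" for j
      using lin_dlam[OF that] by (rule linear_0)
    then have "(\<Sum>l<\<mu>. a (Inr l) * dI l (0, w)) = 0" for w
      using a[rule_format, of "(0, w)"] by (simp add: sum_C)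
    then have Inr: "\<forall>l<\<mu>. a (Inr l) = 0"
      by (intro indep_dI) blast
    then have "(\<Sum>j<\<sigma>. a (Inl j) * dlam j v) = 0" for v
      using a[rule_format, of "(v, 0)"] by (simp add: sum_C)
    then have "\<forall>j<\<sigma>. a (Inl j) = 0"
      by (intro indep_dlam) blast
    with Inr show ?thesis by (auto simp: C_def)
  qed
  have dim_YP: "dim ((\<lambda>b. Y b p) ` {..<kH}) = rank_xieta D kH Y"
    using reg p by (simp add: regular_ranks_def row_rank_xieta_mat)
  have "\<mu> = CARD('m) + CARD('n) - rank_xieta D kH Y - \<sigma>"
    using H' by blast
  moreover have "card C = \<sigma> + \<mu>"
    unfolding C_def by (subst card_Un_disjoint) (auto simp: card_image)
  ultimately have dim_C: "DIM(('n,'m) pt) \<le> dim ((\<lambda>b. Y b p) ` {..<kH}) + card C"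
    unfolding dim_YP by simp
  have "row_rank k C (induced_xieta lam I X p) + dim ((\<lambda>b. Y b p) ` {..<kH})
      = dim ((\<lambda>a. X a p) ` {..<k})"
  proof (rule row_rank_add_dim_kernel_span[where g = g and x = "\<lambda>a. X a p", OF _ lin indep _ _ dim_C])
    show "finite C" by (simp add: C_def)
    show "induced_xieta lam I X p a c = g c (X a p)" if "c \<in> C" for a c
      using that by (auto simp: C_def induced_xieta_def g_def dlam_def dI_def)
    show "(\<lambda>b. Y b p) ` {..<kH} \<subseteq> {v. \<forall>c\<in>C. g c v = 0}"
      using H' p by (auto simp: C_def g_def dlam_def dI_def)
    show "(\<lambda>b. Y b p) ` {..<kH} \<subseteq> span ((\<lambda>a. X a p) ` {..<k})"
      by (rule ideal_basis_span_subset[OF ideal p])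
  qed
  then show ?thesis
    using reg p by (simp add: C_def regular_ranks_def row_rank_xieta_mat)
qed

theorem lemma4:
  fixes D :: "('n::finite,'m::finite) pt set"
    and X Y :: "nat \<Rightarrow> ('n,'m) field"
    and k kH \<sigma> \<mu> :: nat
    and lam :: "nat \<Rightarrow> real^'n \<Rightarrow> real"
    and I :: "nat \<Rightarrow> ('n,'m) pt \<Rightarrow> real"
  assumes "open D" and "D \<noteq> {}"
    and "lie_algebra_basis D k X"
    and "ideal_basis D k X kH Y"
    and "regular_ranks D kH Y"
    and "rank_xi D kH Y \<noteq> rank_xieta D kH Y"
    and "H_invariants D kH Y \<sigma> lam \<mu> I"
    and "NH_invariant_solution_condition D k X \<sigma> lam \<mu> I"
  shows "int (rank_xieta D k X) - int (rank_xi D k X)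
         = int (rank_xieta D kH Y) - int (rank_xi D kH Y)"
proof -
  have xi: "max_rank D k {..<\<sigma>} (induced_xi lam X) + rank_xi D kH Y = rank_xi D k X"
    unfolding rank_xi_def[of D k X]
    using assms(2) row_rank_induced_xi[OF assms(7,5,4)] by (rule max_rank_add_const)
  have xieta: "max_rank D k (Inl ` {..<\<sigma>} \<union> Inr ` {..<\<mu>}) (induced_xieta lam I X)
      + rank_xieta D kH Y = rank_xieta D k X"
    unfolding rank_xieta_def[of D k X]
    using assms(2) row_rank_induced_xieta[OF assms(7,5,4)] by (rule max_rank_add_const)
  from xi xieta assms(8) show ?thesis
    unfolding NH_invariant_solution_condition_def by linarith
qed

end
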